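(* (i) Consider the stochastic equation for the projective coordinate $w$ of a qubit \[ dw = i[(h_{00}+h_{01}w)w-(h_{10}+h_{11}w)]\, dt + (1-w^2)\, dY^1_t + i(1+w^2)\, dY^2_t - 2w\, dY^3_t . \] Writing this equation in terms of the innovation process $dB^j_t = dY^j_t - 2\langle \sigma_j \rangle_W \, dt$, $j=1,2,3$, it takes exactly the same form, with $B^j_t$ in place of $Y^j_t$ (all new terms with the differential $dt$ cancel). (ii) The diffusion operator $D$ corresponding to this equation with vanishing $H$ (i.e. $dw=(1-w^2)\,dY^1_t+i(1+w^2)\,dY^2_t-2w\,dY^3_t$) takes the form \[ D S(x,y) = \frac12 (1+x^2+y^2)^2\left(\frac{\partial^2 S}{\partial x^2}+\frac{\partial^2 S}{\partial y^2}\right) \] in the real coordinates $x,y$ with $w=x+iy$, so that $D=2\Delta_{sp}$, where $\Delta_{sp}$ is the Laplace–Beltrami operator on the 2-dimensional sphere written in stereographic coordinates.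
   Context: A qubit (Hilbert space $\mathbb{C}^2$) is continuously observed by homodyne detection with three coupling operators $L_j$, its a posteriori unnormalized state $\chi=(\chi_0,\chi_1)$ satisfying the linear Belavkin filtering equation $d\chi = -[iH\chi + \frac12 \sum_j L_j^*L_j\chi]\,dt + \sum_j L_j\chi\, dY^j_t$, where $H=(h_{jk})_{j,k=0,1}$ is the self-adjoint Hamiltonian and $Y_t=(Y^1_t,Y^2_t,Y^3_t)$ is the output process (a Brownian motion). The coupling operators are chosen to be the three Pauli matrices $\sigma_1=\begin{pmatrix}0&1\\1&0\end{pmatrix}$, $\sigma_2=\begin{pmatrix}0&-i\\ i&0\end{pmatrix}$, $\sigma_3=\begin{pmatrix}1&0\\0&-1\end{pmatrix}$. The projective coordinate is $w=\chi_1/\chi_0$, $W=(1,w)=\chi/\chi_0$, and for an operator $A$ and vector $v$, $\langle A\rangle_v=(v,Av)/(v,v)$. Rewriting the filtering equation in terms of $w$ via Itô's formula with $L_j=\sigma_j$ yields the stochastic equation for $w$ stated in the claim (the $dt$-terms coming from $L_j^*L_j$ and from the Itô correction vanish). The diffusion operator of an SDE is its generator computed via Itô's formula. *)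

theory Defs
  imports "HOL-Analysis.Analysis"
begin

definition cinner2 :: "complex^2 \<Rightarrow> complex^2 \<Rightarrow> complex" where
  "cinner2 v u = (\<Sum>i\<in>UNIV. cnj (v$i) * u$i)"

definition expect :: "complex^2^2 \<Rightarrow> complex^2 \<Rightarrow> complex" where
  "expect A v = cinner2 v (A *v v) / cinner2 v v"

text \<open>Pauli matrices sigma_1, sigma_2, sigma_3 (rows listed; A$i$j is row i, column j).\<close>
definition pauli :: "nat \<Rightarrow> complex^2^2" where
  "pauli j =
     (if j = 1 then vector [vector [0, 1], vector [1, 0]]
      else if j = 2 then vector [vector [0, - \<i>], vector [\<i>, 0]]
      else vector [vector [1, 0], vector [0, -1]])"

definition Wvec :: "complex \<Rightarrow> complex^2" where
  "Wvec w = vector [1, w]"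

text \<open>Drift of the w-equation; h_{jk} (j,k = 0,1) is H$(j+1)$(k+1).\<close>
definition qubit_drift :: "complex^2^2 \<Rightarrow> complex \<Rightarrow> complex" where
  "qubit_drift H w = \<i> * ((H$1$1 + H$1$2 * w) * w - (H$2$1 + H$2$2 * w))"

definition qubit_diff :: "nat \<Rightarrow> complex \<Rightarrow> complex" where
  "qubit_diff j w =
     (if j = 1 then 1 - w^2 else if j = 2 then \<i> * (1 + w^2) else - 2 * w)"

text \<open>Drift of the equation after substituting dY^j = dB^j + 2 <sigma_j>_W dt.\<close>
definition innovation_drift :: "complex^2^2 \<Rightarrow> complex \<Rightarrow> complex" where
  "innovation_drift H w =
     qubit_drift H w + (\<Sum>j\<in>{1,2,3}. qubit_diff j w * (2 * expect (pauli j) (Wvec w)))"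

definition pdx :: "(real \<Rightarrow> real \<Rightarrow> real) \<Rightarrow> real \<Rightarrow> real \<Rightarrow> real" where
  "pdx S x y = deriv (\<lambda>t. S t y) x"
definition pdy :: "(real \<Rightarrow> real \<Rightarrow> real) \<Rightarrow> real \<Rightarrow> real \<Rightarrow> real" where
  "pdy S x y = deriv (\<lambda>t. S x t) y"
definition pdxx :: "(real \<Rightarrow> real \<Rightarrow> real) \<Rightarrow> real \<Rightarrow> real \<Rightarrow> real" where
  "pdxx S x y = deriv (\<lambda>t. pdx S t y) x"
definition pdyy :: "(real \<Rightarrow> real \<Rightarrow> real) \<Rightarrow> real \<Rightarrow> real \<Rightarrow> real" where
  "pdyy S x y = deriv (\<lambda>t. pdy S x t) y"
definition pdxy :: "(real \<Rightarrow> real \<Rightarrow> real) \<Rightarrow> real \<Rightarrow> real \<Rightarrow> real" where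
  "pdxy S x y = deriv (\<lambda>t. pdx S x t) y"
definition pdyx :: "(real \<Rightarrow> real \<Rightarrow> real) \<Rightarrow> real \<Rightarrow> real \<Rightarrow> real" where
  "pdyx S x y = deriv (\<lambda>t. pdy S t y) x"

text \<open>Generator (via Ito's formula) of the SDE dw = a(w) dt + sum_{j in J} b_j(w) dY^j,
  Y^j independent standard Brownian motions, written in real coordinates w = x + i y:
  D S = a_x S_x + a_y S_y + 1/2 sum_j sum_{k,l} b_j^k b_j^l d_k d_l S.\<close>
definition ito_generator ::
  "(complex \<Rightarrow> complex) \<Rightarrow> (nat \<Rightarrow> complex \<Rightarrow> complex) \<Rightarrow> nat set \<Rightarrow>
   (real \<Rightarrow> real \<Rightarrow> real) \<Rightarrow> real \<Rightarrow> real \<Rightarrow> real" where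
  "ito_generator a b J S x y =
     (let w = Complex x y in
       Re (a w) * pdx S x y + Im (a w) * pdy S x y
       + 1/2 * (\<Sum>j\<in>J. (Re (b j w))^2 * pdxx S x y
                     + Re (b j w) * Im (b j w) * (pdxy S x y + pdyx S x y)
                     + (Im (b j w))^2 * pdyy S x y))"

text \<open>Laplace-Beltrami operator of a conformal metric lam(x,y) (dx^2 + dy^2) in 2D.\<close>
definition conformal_laplace_beltrami ::
  "(real \<Rightarrow> real \<Rightarrow> real) \<Rightarrow> (real \<Rightarrow> real \<Rightarrow> real) \<Rightarrow> real \<Rightarrow> real \<Rightarrow> real" where
  "conformal_laplace_beltrami lam S x y = (pdxx S x y + pdyy S x y) / lam x y"

text \<open>Round metric of the unit sphere in stereographic coordinates: 4/(1+x^2+y^2)^2 (dx^2+dy^2).\<close>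
definition sphere_stereo_factor :: "real \<Rightarrow> real \<Rightarrow> real" where
  "sphere_stereo_factor x y = 4 / (1 + x^2 + y^2)^2"

definition laplace_sphere :: "(real \<Rightarrow> real \<Rightarrow> real) \<Rightarrow> real \<Rightarrow> real \<Rightarrow> real" where
  "laplace_sphere = conformal_laplace_beltrami sphere_stereo_factor"

end

theory Submission
  imports Defs
begin

text \<open>
  (i) The innovation substitution adds the drift 2 sum_j b_j(w) <sigma_j>_W, where
  b(w) = (1 - w^2, i (1 + w^2), -2 w) are the diffusion coefficients. The expectations form the
  Bloch vector (w + w', i (w' - w), 1 - w w') / (1 + w w'), with w' the conjugate of w, and this
  vector is orthogonal to b(w) for the complex bilinear form, so the extra drift vanishes.

  (ii) For a driftless equation the generator is 1/4 sum_j |b_j|^2 (S_xx + S_yy) plus terms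
  proportional to the real and imaginary parts of sum_j b_j^2. Here b(w) is a null vector,
  sum_j b_j^2 = 0, and sum_j |b_j|^2 = 2 (1 + |w|^2)^2, which is twice the inverse conformal factor
  of the round metric in stereographic coordinates.
\<close>

lemma cinner2_expand: "cinner2 v u = cnj (v$1) * u$1 + cnj (v$2) * u$2"
  unfolding cinner2_def by (simp add: sum_2)

lemma matrix_vector_mult_2_nth:
  "((A::complex^2^2) *v v)$i = A$i$1 * v$1 + A$i$2 * v$2"
  by (simp add: matrix_vector_mult_def sum_2)

lemma cinner2_Wvec_self: "cinner2 (Wvec w) (Wvec w) = 1 + cnj w * w"
  by (simp add: cinner2_expand Wvec_def)

lemma expect_pauli_Wvec:
  "expect (pauli 1) (Wvec w) = (w + cnj w) / (1 + cnj w * w)"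
  "expect (pauli 2) (Wvec w) = \<i> * (cnj w - w) / (1 + cnj w * w)"
  "expect (pauli 3) (Wvec w) = (1 - cnj w * w) / (1 + cnj w * w)"
  by (simp_all add: expect_def cinner2_Wvec_self cinner2_expand matrix_vector_mult_2_nth
      pauli_def Wvec_def algebra_simps)

lemma sum_insert_1_2_3: "(\<Sum>j\<in>{1,2,3::nat}. f j) = f 1 + f 2 + f 3"
  by (simp add: add.assoc)

lemma qubit_diff_simps:
  "qubit_diff 1 w = 1 - w\<^sup>2"
  "qubit_diff 2 w = \<i> * (1 + w\<^sup>2)"
  "qubit_diff 3 w = - 2 * w"
  by (simp_all add: qubit_diff_def)

lemma qubit_diff_orthogonal_expect_pauli:
  "(\<Sum>j\<in>{1,2,3}. qubit_diff j w * expect (pauli j) (Wvec w)) = 0"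
proof -
  have "(\<Sum>j\<in>{1,2,3}. qubit_diff j w * expect (pauli j) (Wvec w))
      = ((1 - w\<^sup>2) * (w + cnj w) + \<i> * (1 + w\<^sup>2) * (\<i> * (cnj w - w))
          + (- 2 * w) * (1 - cnj w * w)) / (1 + cnj w * w)"
    unfolding sum_insert_1_2_3 qubit_diff_simps expect_pauli_Wvec
    by (simp add: add_divide_distrib[symmetric] diff_divide_distrib[symmetric])
  also have "\<dots> = 0"
    by (simp add: algebra_simps power2_eq_square)
  finally show ?thesis .
qed

lemma innovation_drift_eq_qubit_drift: "innovation_drift H w = qubit_drift H w"
proof -
  have "(\<Sum>j\<in>{1,2,3}. qubit_diff j w * (2 * expect (pauli j) (Wvec w)))
      = 2 * (\<Sum>j\<in>{1,2,3}. qubit_diff j w * expect (pauli j) (Wvec w))"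
    unfolding sum_distrib_left by (simp only: mult.left_commute)
  then show ?thesis
    unfolding innovation_drift_def qubit_diff_orthogonal_expect_pauli by simp
qed

lemma qubit_drift_zero: "qubit_drift 0 = (\<lambda>_. 0)"
  by (simp add: qubit_drift_def fun_eq_iff)

lemma ito_generator_driftless:
  fixes x y :: real
  defines "w \<equiv> Complex x y"
  shows "ito_generator (\<lambda>_. 0) b J S x y =
    1/4 * ((\<Sum>j\<in>J. (cmod (b j w))\<^sup>2) * (pdxx S x y + pdyy S x y)
         + Re (\<Sum>j\<in>J. (b j w)\<^sup>2) * (pdxx S x y - pdyy S x y)
         + Im (\<Sum>j\<in>J. (b j w)\<^sup>2) * (pdxy S x y + pdyx S x y))"
proof -
  have second_order_term: "(Re z)\<^sup>2 * p + Re z * Im z * q + (Im z)\<^sup>2 * r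
      = 1/2 * ((cmod z)\<^sup>2 * (p + r) + Re (z\<^sup>2) * (p - r) + Im (z\<^sup>2) * q)" for z :: complex
    and p q r :: real
    unfolding cmod_power2 by (simp add: power2_eq_square algebra_simps)
  show ?thesis
    unfolding ito_generator_def Let_def w_def[symmetric] second_order_term
    by (simp add: Re_sum Im_sum sum.distrib sum_subtractf sum_distrib_left sum_distrib_right
        algebra_simps)
qed

lemma qubit_diff_sum_squares: "(\<Sum>j\<in>{1,2,3}. (qubit_diff j w)\<^sup>2) = 0"
  unfolding sum_insert_1_2_3 qubit_diff_simps by (simp add: power2_eq_square algebra_simps)

lemma qubit_diff_sum_norms:
  "(\<Sum>j\<in>{1,2,3}. (cmod (qubit_diff j (Complex x y)))\<^sup>2) = 2 * (1 + x\<^sup>2 + y\<^sup>2)\<^sup>2"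
  unfolding sum_insert_1_2_3 qubit_diff_simps cmod_power2
  by (simp add: power2_eq_square algebra_simps)

lemma laplace_sphere_eq:
  "laplace_sphere S x y = (1 + x\<^sup>2 + y\<^sup>2)\<^sup>2 / 4 * (pdxx S x y + pdyy S x y)"
proof -
  have "1 + x\<^sup>2 + y\<^sup>2 \<noteq> 0"
    using zero_le_power2[of x] zero_le_power2[of y] by linarith
  then show ?thesis
    by (simp add: laplace_sphere_def conformal_laplace_beltrami_def sphere_stereo_factor_def)
qed

theorem proposition3p1:
  fixes H :: "complex^2^2"
  assumes "\<forall>j k. H$j$k = cnj (H$k$j)"
  shows "(\<forall>w. innovation_drift H w = qubit_drift H w)
    \<and> (\<forall>S x y.
         ito_generator (qubit_drift 0) qubit_diff {1,2,3} S x y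
           = 1/2 * (1 + x^2 + y^2)^2 * (pdxx S x y + pdyy S x y)
       \<and> ito_generator (qubit_drift 0) qubit_diff {1,2,3} S x y
           = 2 * laplace_sphere S x y)"
proof -
  have generator: "ito_generator (qubit_drift 0) qubit_diff {1,2,3} S x y
      = 1/2 * (1 + x\<^sup>2 + y\<^sup>2)\<^sup>2 * (pdxx S x y + pdyy S x y)" for S x y
    unfolding qubit_drift_zero ito_generator_driftless qubit_diff_sum_squares
      qubit_diff_sum_norms
    by simp
  show ?thesis
    unfolding generator laplace_sphere_eq by (simp add: innovation_drift_eq_qubit_drift)
qed

end
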